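(* Let $t,\ q\in(0,\infty)$ and let $\Phi$ be an Orlicz function with positive lower type $p_{\Phi}^-$ and positive upper type $p_{\Phi}^+$. Then $(E_\Phi^q)_t(\mathbb{R}^n)$ and $\ell^q(L^\Phi_t)(\mathbb{R}^n)$ coincide and, for any $f\in(E_\Phi^q)_t(\mathbb{R}^n)$, $$\left[t^{n}\sum_{k\in\mathbb{Z}^n}\|f\chi_{Q_{tk}}\|^q_{L^\Phi(\mathbb{R}^n)}\right]^{1/q}\sim\left\{\int_{\mathbb{R}^n}\|f\chi_{B(x,t)}\|_{L^\Phi(\mathbb{R}^n)}^q\,dx\right\}^{1/q},$$ where the equivalence constants are independent of $f$ and $t$.
   Context: An Orlicz function is a non-decreasing $\Phi:[0,\infty)\to[0,\infty)$ with $\Phi(0)=0$, $\Phi(\tau)>0$ for $\tau>0$, $\lim_{\tau\to\infty}\Phi(\tau)=\infty$; it is of lower (resp. upper) type $p$ if there is $C_{(p)}>0$ with $\Phi(s\tau)\le C_{(p)}s^p\Phi(\tau)$ for all $\tau\ge0$ and $s\in(0,1)$ (resp. $s\ge1$); positive type means type $p$ for some $p>0$. $\|f\|_{L^\Phi(\mathbb{R}^n)}:=\inf\{\lambda>0:\int_{\mathbb{R}^n}\Phi(|f(x)|/\lambda)\,dx\le1\}$. $(E_\Phi^q)_t(\mathbb{R}^n)$ is the set of measurable $f$ with $\|f\|_{(E_\Phi^q)_t(\mathbb{R}^n)}:=\{\int_{\mathbb{R}^n}[\|f\chi_{B(x,t)}\|_{L^\Phi}/\|\chi_{B(x,t)}\|_{L^\Phi}]^q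 dx\}^{1/q}<\infty$, $B(x,t)$ the open ball. For $k\in\mathbb{Z}^n$, $Q_{tk}:=t[k+[0,1)^n]$, and the Orlicz-amalgam space $\ell^q(L^\Phi_t)(\mathbb{R}^n)$ is the set of measurable $f$ with $\|f\|_{\ell^q(L^\Phi_t)(\mathbb{R}^n)}:=[\sum_{k\in\mathbb{Z}^n}\|f\chi_{Q_{tk}}\|^q_{L^\Phi(\mathbb{R}^n)}]^{1/q}<\infty$. $A\sim B$ means $C^{-1}B\le A\le CB$ for a positive constant $C$. *)

theory Defs
  imports "HOL-Analysis.Analysis"
begin

text \<open>Real powers of extended nonnegative reals (\<open>\<infinity>\<close> stays \<open>\<infinity>\<close>); used only with positive exponents.\<close>
definition ennpow :: "ennreal \<Rightarrow> real \<Rightarrow> ennreal" where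
  "ennpow x a = (if x = \<infinity> then \<infinity> else ennreal (enn2real x powr a))"

definition orlicz_function :: "(real \<Rightarrow> real) \<Rightarrow> bool" where
  "orlicz_function \<Phi> \<longleftrightarrow>
     (\<forall>s \<tau>. 0 \<le> s \<and> s \<le> \<tau> \<longrightarrow> \<Phi> s \<le> \<Phi> \<tau>) \<and>
     \<Phi> 0 = 0 \<and> (\<forall>\<tau>>0. \<Phi> \<tau> > 0) \<and> filterlim \<Phi> at_top at_top"

definition lower_type :: "(real \<Rightarrow> real) \<Rightarrow> real \<Rightarrow> bool" where
  "lower_type \<Phi> p \<longleftrightarrow> (\<exists>C>0. \<forall>\<tau>\<ge>0. \<forall>s. 0 < s \<and> s < 1 \<longrightarrow> \<Phi> (s * \<tau>) \<le> C * s powr p * \<Phi> \<tau>)"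

definition upper_type :: "(real \<Rightarrow> real) \<Rightarrow> real \<Rightarrow> bool" where
  "upper_type \<Phi> p \<longleftrightarrow> (\<exists>C>0. \<forall>\<tau>\<ge>0. \<forall>s. 1 \<le> s \<longrightarrow> \<Phi> (s * \<tau>) \<le> C * s powr p * \<Phi> \<tau>)"

text \<open>Luxemburg norm on \<open>\<real>\<^sup>n\<close> (Lebesgue measure), with value \<open>\<infinity>\<close> if no admissible \<open>l\<close> exists.\<close>
definition orlicz_norm :: "(real \<Rightarrow> real) \<Rightarrow> (real^'n \<Rightarrow> real) \<Rightarrow> ennreal" where
  "orlicz_norm \<Phi> f = Inf {ennreal l | l. l > 0 \<and>
      (\<integral>\<^sup>+ x. ennreal (\<Phi> (\<bar>f x\<bar> / l)) \<partial>lebesgue) \<le> 1}"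

definition E_norm :: "(real \<Rightarrow> real) \<Rightarrow> real \<Rightarrow> real \<Rightarrow> (real^'n \<Rightarrow> real) \<Rightarrow> ennreal" where
  "E_norm \<Phi> q t f = ennpow (\<integral>\<^sup>+ x. ennpow (orlicz_norm \<Phi> (\<lambda>y. f y * indicator (ball x t) y)
        / orlicz_norm \<Phi> (indicator (ball x t) :: real^'n \<Rightarrow> real)) q \<partial>lebesgue) (1 / q)"

definition E_space :: "(real \<Rightarrow> real) \<Rightarrow> real \<Rightarrow> real \<Rightarrow> (real^'n \<Rightarrow> real) set" where
  "E_space \<Phi> q t = {f \<in> borel_measurable lebesgue. E_norm \<Phi> q t f < \<infinity>}"

definition cube :: "real \<Rightarrow> int^'n \<Rightarrow> (real^'n) set" where
  "cube t k = {x. \<forall>i. t * real_of_int (k$i) \<le> x$i \<and> x$i < t * (real_of_int (k$i) + 1)}"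

definition amalgam_norm :: "(real \<Rightarrow> real) \<Rightarrow> real \<Rightarrow> real \<Rightarrow> (real^'n \<Rightarrow> real) \<Rightarrow> ennreal" where
  "amalgam_norm \<Phi> q t f = ennpow (\<Sum>\<^sub>\<infinity>k\<in>UNIV. ennpow (orlicz_norm \<Phi> (\<lambda>y. f y * indicator (cube t k) y)) q) (1 / q)"

definition amalgam_space :: "(real \<Rightarrow> real) \<Rightarrow> real \<Rightarrow> real \<Rightarrow> (real^'n \<Rightarrow> real) set" where
  "amalgam_space \<Phi> q t = {f \<in> borel_measurable lebesgue. amalgam_norm \<Phi> q t f < \<infinity>}"

end

theory Submission
  imports Defs
begin

(* Cover the ball B(x,t) by the 3^n cubes Q_{t(k+j)}, j in {-1,0,1}^n, next to the cube Q_{tk}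
   containing x, and cover each cube Q_{tk} by the n^n cubes of side t/n inside it, each of which
   lies in the ball of radius t around any of its points.  A positive lower type p with constant C
   makes the Luxemburg norm a quasi-norm for finite covers: if |g| is pointwise dominated by one of
   N functions G_i, then ||g|| <= (2 + (C N)^(1/p)) max_i ||G_i||.  Integrating the resulting
   pointwise bounds in x, with majorants and minorants constant on the cubes of a grid, gives both
   inequalities with constants depending only on n, q, p and C.  The normalising factor
   ||chi_B(x,t)|| in the definition of E_norm is a positive finite constant independent of x, so the
   same bounds identify the two spaces. *)

lemma ennpow_top [simp]: "ennpow top a = top"
  by (simp add: ennpow_def)

lemma ennpow_ennreal: "0 \<le> x \<Longrightarrow> ennpow (ennreal x) a = ennreal (x powr a)"
  by (simp add: ennpow_def)

lemma ennpow_less_top_iff: "ennpow x a < top \<longleftrightarrow> x < top"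
  by (cases x rule: ennreal_cases) (auto simp: ennpow_def)

lemma ennpow_mono:
  assumes "x \<le> y" "0 \<le> a"
  shows "ennpow x a \<le> ennpow y a"
proof (cases y rule: ennreal_cases)
  case (real y')
  with assms(1) obtain x' where "x = ennreal x'" "0 \<le> x'" "x' \<le> y'"
    by (cases x rule: ennreal_cases) (auto simp: ennreal_le_iff top_unique)
  with real assms(2) show ?thesis by (simp add: ennpow_ennreal powr_mono2 ennreal_leI)
qed simp

lemma ennpow_cmult:
  assumes "0 \<le> c" "0 < a"
  shows "ennpow (ennreal c * x) a = ennreal (c powr a) * ennpow x a"
proof (cases x rule: ennreal_cases)
  case (real x')
  then have "ennpow (ennreal c * x) a = ennpow (ennreal (c * x')) a"
    using assms by (simp add: ennreal_mult)
  also have "\<dots> = ennreal (c powr a) * ennpow x a"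
    using real assms by (subst ennpow_ennreal) (simp_all add: ennpow_ennreal powr_mult ennreal_mult)
  finally show ?thesis .
next
  case top
  then show ?thesis
    using assms by (cases "c = 0") (simp_all add: ennpow_def ennreal_mult_top)
qed

lemma ennpow_divide:
  assumes "0 < c" "0 < a"
  shows "ennpow (x / ennreal c) a = ennpow x a / ennreal (c powr a)"
proof (cases x rule: ennreal_cases)
  case (real x')
  then show ?thesis
    using assms by (simp add: ennpow_ennreal divide_ennreal powr_divide)
next
  case top
  then show ?thesis
    using assms by (simp add: ennpow_def ennreal_top_divide)
qed

lemma ennpow_le_cmult:
  assumes "x \<le> ennreal c * y" "0 \<le> c" "0 < a"
  shows "ennpow x a \<le> ennreal (c powr a) * ennpow y a"
proof -
  have "ennpow x a \<le> ennpow (ennreal c * y) a" using assms by (intro ennpow_mono) auto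
  then show ?thesis using assms(2,3) by (simp add: ennpow_cmult)
qed

lemma nn_integral_cmult_ge: "c * integral\<^sup>N M f \<le> (\<integral>\<^sup>+x. c * f x \<partial>M)"
proof -
  have "c * integral\<^sup>N M f = (SUP g \<in> {g. simple_function M g \<and> g \<le> f}. c * integral\<^sup>S M g)"
    unfolding nn_integral_def by (simp add: SUP_mult_left_ennreal)
  also have "\<dots> \<le> (\<integral>\<^sup>+x. c * f x \<partial>M)"
  proof (rule SUP_least, safe)
    fix g assume g: "simple_function M g" "g \<le> f"
    have "c * integral\<^sup>S M g = integral\<^sup>S M (\<lambda>x. c * g x)" using g(1) by simp
    also have "\<dots> \<le> (\<integral>\<^sup>+x. c * f x \<partial>M)"
      unfolding nn_integral_def
      by (rule SUP_upper) (use g in \<open>auto simp: le_fun_def intro: mult_left_mono\<close>)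
    finally show "c * integral\<^sup>S M g \<le> (\<integral>\<^sup>+x. c * f x \<partial>M)" .
  qed
  finally show ?thesis .
qed

(* Used for the ball integral, whose integrand x \<mapsto> ||f chi_B(x,t)||^q is not known to be measurable. *)
lemma nn_integral_divide_nonmeasurable:
  assumes "c \<noteq> 0" "c < top"
  shows "(\<integral>\<^sup>+x. f x / c \<partial>M) = integral\<^sup>N M f / c"
proof (rule antisym)
  have "c * (\<integral>\<^sup>+x. f x / c \<partial>M) \<le> (\<integral>\<^sup>+x. c * (f x / c) \<partial>M)" by (rule nn_integral_cmult_ge)
  also have "\<dots> = integral\<^sup>N M f"
    using assms by (simp add: ennreal_times_divide mult.commute[of c] ennreal_mult_divide_eq)
  finally have "c * (\<integral>\<^sup>+x. f x / c \<partial>M) / c \<le> integral\<^sup>N M f / c" by (rule divide_right_mono_ennreal)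
  then show "(\<integral>\<^sup>+x. f x / c \<partial>M) \<le> integral\<^sup>N M f / c"
    using assms by (simp add: mult.commute[of c] ennreal_mult_divide_eq)
  show "integral\<^sup>N M f / c \<le> (\<integral>\<^sup>+x. f x / c \<partial>M)"
    using nn_integral_cmult_ge[of "inverse c" M f] by (simp add: divide_ennreal_def mult.commute)
qed

lemma infsum_eq_nn_integral_count_space:
  fixes f :: "'a::countable \<Rightarrow> ennreal"
  shows "(\<Sum>\<^sub>\<infinity>k\<in>UNIV. f k) = (\<integral>\<^sup>+k. f k \<partial>count_space UNIV)"
proof (cases "finite (UNIV :: 'a set)")
  case True
  then show ?thesis by (simp add: nn_integral_count_space_finite)
next
  case False
  define e where "e = from_nat_into (UNIV :: 'a set)"
  have e: "bij_betw e UNIV UNIV"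
    unfolding e_def using False by (intro bij_betw_from_nat_into) auto
  have "(\<lambda>n. f (e n)) sums (\<Sum>\<^sub>\<infinity>n\<in>UNIV. f (e n))"
    by (intro has_sum_imp_sums has_sum_infsum nonneg_summable_on_complete) simp
  then have "(\<Sum>\<^sub>\<infinity>n\<in>UNIV. f (e n)) = (\<integral>\<^sup>+n. f (e n) \<partial>count_space UNIV)"
    by (simp add: sums_unique nn_integral_count_space_nat)
  then show ?thesis
    using infsum_reindex_bij_betw[OF e, of f] nn_integral_bij_count_space[OF e, of f] by simp
qed

lemma infsum_ennreal_cmult: "(\<Sum>\<^sub>\<infinity>k\<in>A. c * f k) = (c :: ennreal) * (\<Sum>\<^sub>\<infinity>k\<in>A. f k)"
  by (simp add: nonneg_infsum_complete SUP_mult_left_ennreal sum_distrib_left)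

lemma infsum_sum_inj_le:
  fixes b :: "'a::countable \<Rightarrow> ennreal" and \<phi> :: "'r \<Rightarrow> 'a \<Rightarrow> 'a"
  assumes "finite R" "\<And>r. r \<in> R \<Longrightarrow> inj (\<phi> r)"
  shows "(\<Sum>\<^sub>\<infinity>k\<in>UNIV. \<Sum>r\<in>R. b (\<phi> r k)) \<le> of_nat (card R) * (\<Sum>\<^sub>\<infinity>k\<in>UNIV. b k)"
proof -
  have le: "(\<integral>\<^sup>+k. b (\<phi> r k) \<partial>count_space UNIV) \<le> (\<integral>\<^sup>+k. b k \<partial>count_space UNIV)" if "r \<in> R" for r
  proof -
    have "bij_betw (\<phi> r) UNIV (range (\<phi> r))" using assms(2)[OF that] by (simp add: bij_betw_def)
    then have "(\<integral>\<^sup>+k. b (\<phi> r k) \<partial>count_space UNIV) = (\<integral>\<^sup>+k. b k \<partial>count_space (range (\<phi> r)))"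
      by (rule nn_integral_bij_count_space)
    also have "\<dots> = (\<integral>\<^sup>+k. b k * indicator (range (\<phi> r)) k \<partial>count_space UNIV)"
      by (simp add: nn_integral_count_space_indicator)
    also have "\<dots> \<le> (\<integral>\<^sup>+k. b k \<partial>count_space UNIV)"
      by (intro nn_integral_mono) (auto split: split_indicator)
    finally show ?thesis .
  qed
  have "(\<integral>\<^sup>+k. (\<Sum>r\<in>R. b (\<phi> r k)) \<partial>count_space UNIV) =
      (\<Sum>r\<in>R. \<integral>\<^sup>+k. b (\<phi> r k) \<partial>count_space UNIV)"
    by (rule nn_integral_sum) simp
  also have "\<dots> \<le> (\<Sum>r\<in>R. \<integral>\<^sup>+k. b k \<partial>count_space UNIV)"
    by (rule sum_mono) (rule le)
  finally show ?thesis by (simp add: infsum_eq_nn_integral_count_space)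
qed

section \<open>Orlicz functions and the Luxemburg norm\<close>

lemma orlicz_function_nonneg: "orlicz_function \<Phi> \<Longrightarrow> 0 \<le> x \<Longrightarrow> 0 \<le> \<Phi> x"
  unfolding orlicz_function_def by (metis order_refl)

lemma orlicz_function_mono: "orlicz_function \<Phi> \<Longrightarrow> 0 \<le> x \<Longrightarrow> x \<le> y \<Longrightarrow> \<Phi> x \<le> \<Phi> y"
  unfolding orlicz_function_def by blast

lemma borel_measurable_orlicz_function:
  assumes "orlicz_function \<Phi>" and [measurable]: "g \<in> borel_measurable M" and "\<And>x. 0 \<le> g x"
  shows "(\<lambda>x. \<Phi> (g x)) \<in> borel_measurable M"
proof -
  have "mono (\<lambda>x. \<Phi> (max 0 x))"
    by (auto simp: mono_def intro!: orlicz_function_mono[OF assms(1)])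
  then have [measurable]: "(\<lambda>x. \<Phi> (max 0 x)) \<in> borel_measurable borel"
    by (rule borel_measurable_mono)
  have "(\<lambda>x. \<Phi> (max 0 (g x))) \<in> borel_measurable M" by measurable
  then show ?thesis using assms(3) by (simp add: max_absorb2)
qed

abbreviation orlicz_modular :: "(real \<Rightarrow> real) \<Rightarrow> (real^'n \<Rightarrow> real) \<Rightarrow> real \<Rightarrow> ennreal" where
  "orlicz_modular \<Phi> g l \<equiv> \<integral>\<^sup>+ x. ennreal (\<Phi> (\<bar>g x\<bar> / l)) \<partial>lebesgue"

lemma orlicz_modular_mono:
  assumes "orlicz_function \<Phi>" "0 < l" "\<And>y. \<bar>g y\<bar> \<le> \<bar>h y\<bar>"
  shows "orlicz_modular \<Phi> g l \<le> orlicz_modular \<Phi> h l"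
  using assms by (intro nn_integral_mono ennreal_leI orlicz_function_mono[OF assms(1)] divide_right_mono) auto

lemma orlicz_modular_antimono:
  assumes "orlicz_function \<Phi>" "0 < l" "l \<le> L"
  shows "orlicz_modular \<Phi> g L \<le> orlicz_modular \<Phi> g l"
  using assms by (intro nn_integral_mono ennreal_leI orlicz_function_mono[OF assms(1)] divide_left_mono) auto

lemma measurable_orlicz_modular_integrand:
  assumes "orlicz_function \<Phi>" "g \<in> borel_measurable lebesgue" "0 < l"
  shows "(\<lambda>x. ennreal (\<Phi> (\<bar>g x\<bar> / l))) \<in> borel_measurable lebesgue"
proof -
  have "(\<lambda>x. \<Phi> (\<bar>g x\<bar> / l)) \<in> borel_measurable lebesgue"
    by (rule borel_measurable_orlicz_function) (use assms in auto)
  then show ?thesis by measurable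
qed

lemma orlicz_norm_le: "0 < l \<Longrightarrow> orlicz_modular \<Phi> g l \<le> 1 \<Longrightarrow> orlicz_norm \<Phi> g \<le> ennreal l"
  unfolding orlicz_norm_def by (rule Inf_lower) auto

lemma orlicz_modular_le_one:
  assumes "orlicz_function \<Phi>" "orlicz_norm \<Phi> g < ennreal L"
  shows "orlicz_modular \<Phi> g L \<le> 1"
proof -
  from assms(2) obtain l where l: "0 < l" "orlicz_modular \<Phi> g l \<le> 1" "ennreal l < ennreal L"
    unfolding orlicz_norm_def Inf_less_iff by auto
  then have "orlicz_modular \<Phi> g L \<le> orlicz_modular \<Phi> g l"
    by (intro orlicz_modular_antimono[OF assms(1)]) (auto simp: ennreal_less_iff)
  with l(2) show ?thesis by simp
qed

lemma orlicz_norm_mono: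
  assumes "orlicz_function \<Phi>" "\<And>y. \<bar>g y\<bar> \<le> \<bar>h y\<bar>"
  shows "orlicz_norm \<Phi> g \<le> orlicz_norm \<Phi> h"
  unfolding orlicz_norm_def
  by (rule Inf_superset_mono) (auto intro: order_trans[OF orlicz_modular_mono[OF assms(1) _ assms(2)]])

lemma orlicz_modular_indicator:
  assumes "orlicz_function \<Phi>" "A \<in> sets lebesgue"
  shows "orlicz_modular \<Phi> (indicator A) l = ennreal (\<Phi> (1 / l)) * emeasure lebesgue A"
proof -
  have "(\<lambda>y. ennreal (\<Phi> (\<bar>indicator A y :: real\<bar> / l))) = (\<lambda>y. ennreal (\<Phi> (1 / l)) * indicator A y)"
    using assms(1) by (auto simp: fun_eq_iff orlicz_function_def split: split_indicator)
  then show ?thesis using assms(2) by (simp add: nn_integral_cmult_indicator)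
qed

lemma orlicz_norm_indicator_cong:
  assumes "orlicz_function \<Phi>" "A \<in> sets lebesgue" "B \<in> sets lebesgue"
    and "emeasure lebesgue A = emeasure lebesgue B"
  shows "orlicz_norm \<Phi> (indicator A :: real^'n \<Rightarrow> real) = orlicz_norm \<Phi> (indicator B)"
  by (simp only: orlicz_norm_def orlicz_modular_indicator[OF assms(1,2)]
      orlicz_modular_indicator[OF assms(1,3)] assms(4))

lemma orlicz_norm_indicator_pos:
  fixes A :: "(real^'n) set"
  assumes \<Phi>: "orlicz_function \<Phi>" and A: "A \<in> sets lebesgue" "0 < emeasure lebesgue A"
  shows "0 < orlicz_norm \<Phi> (indicator A :: real^'n \<Rightarrow> real)"
proof -
  obtain v where v: "0 < v" "ennreal v \<le> emeasure lebesgue A"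
    using A(2) by (cases "emeasure lebesgue A" rule: ennreal_cases) (auto intro: that[of 1])
  obtain M0 where M0: "\<And>y. M0 \<le> y \<Longrightarrow> 2 / v \<le> \<Phi> y"
    using \<Phi> unfolding orlicz_function_def filterlim_at_top eventually_at_top_linorder by blast
  define M where "M = max M0 1"
  have M: "1 \<le> M" "\<And>y. M \<le> y \<Longrightarrow> 2 / v \<le> \<Phi> y"
    using M0 unfolding M_def by auto
  have "ennreal (1 / M) \<le> orlicz_norm \<Phi> (indicator A :: real^'n \<Rightarrow> real)"
    unfolding orlicz_norm_def
  proof (rule Inf_greatest, safe)
    fix l :: real assume l: "0 < l" "orlicz_modular \<Phi> (indicator A :: real^'n \<Rightarrow> real) l \<le> 1"
    show "ennreal (1 / M) \<le> ennreal l"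
    proof (rule ccontr)
      assume "\<not> ennreal (1 / M) \<le> ennreal l"
      then have "M \<le> 1 / l" using l M by (simp add: ennreal_le_iff2 not_le field_simps)
      then have "2 \<le> \<Phi> (1 / l) * v" using M(2) v by (simp add: field_simps)
      then have "ennreal 2 \<le> ennreal (\<Phi> (1 / l) * v)" by (rule ennreal_leI)
      also have "\<dots> = ennreal (\<Phi> (1 / l)) * ennreal v"
        using v l orlicz_function_nonneg[OF \<Phi>, of "1 / l"] by (simp add: ennreal_mult)
      also have "\<dots> \<le> orlicz_modular \<Phi> (indicator A :: real^'n \<Rightarrow> real) l"
        unfolding orlicz_modular_indicator[OF \<Phi> A(1)] by (intro mult_left_mono v) simp
      finally have "ennreal 2 \<le> 1" using l(2) by (rule order_trans)
      then show False by simp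
    qed
  qed
  moreover have "0 < ennreal (1 / M)" using M by simp
  ultimately show ?thesis by (rule less_le_trans[rotated])
qed

lemma orlicz_modular_cover_le:
  assumes \<Phi>: "orlicz_function \<Phi>" and "finite I" "0 < l"
    and "\<And>i. i \<in> I \<Longrightarrow> G i \<in> borel_measurable lebesgue"
    and cover: "\<And>y. \<exists>i\<in>I. \<bar>g y\<bar> \<le> \<bar>G i y\<bar>"
  shows "orlicz_modular \<Phi> g l \<le> (\<Sum>i\<in>I. orlicz_modular \<Phi> (G i) l)"
proof -
  have "orlicz_modular \<Phi> g l \<le> (\<integral>\<^sup>+x. (\<Sum>i\<in>I. ennreal (\<Phi> (\<bar>G i x\<bar> / l))) \<partial>lebesgue)"
  proof (rule nn_integral_mono)
    fix x
    obtain i where "i \<in> I" "\<bar>g x\<bar> \<le> \<bar>G i x\<bar>" using cover by blast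
    then have "ennreal (\<Phi> (\<bar>g x\<bar> / l)) \<le> ennreal (\<Phi> (\<bar>G i x\<bar> / l))"
      using \<open>0 < l\<close> by (intro ennreal_leI orlicz_function_mono[OF \<Phi>] divide_right_mono) auto
    also have "\<dots> \<le> (\<Sum>i\<in>I. ennreal (\<Phi> (\<bar>G i x\<bar> / l)))"
      using \<open>finite I\<close> \<open>i \<in> I\<close> by (intro member_le_sum) auto
    finally show "ennreal (\<Phi> (\<bar>g x\<bar> / l)) \<le> (\<Sum>i\<in>I. ennreal (\<Phi> (\<bar>G i x\<bar> / l)))" .
  qed
  also have "\<dots> = (\<Sum>i\<in>I. orlicz_modular \<Phi> (G i) l)"
    using assms by (intro nn_integral_sum measurable_orlicz_modular_integrand) auto
  finally show ?thesis .
qed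

abbreviation orlicz_norm_pow :: "(real \<Rightarrow> real) \<Rightarrow> real \<Rightarrow> (real^'n \<Rightarrow> real) \<Rightarrow> (real^'n) set \<Rightarrow> ennreal" where
  "orlicz_norm_pow \<Phi> q f A \<equiv> ennpow (orlicz_norm \<Phi> (\<lambda>y. f y * indicator A y)) q"

section \<open>Cubes of a grid\<close>

definition cube_index :: "real \<Rightarrow> real^'n \<Rightarrow> int^'n" where
  "cube_index s x = (\<chi> i. \<lfloor>x$i / s\<rfloor>)"

lemma mem_cube_iff_cube_index:
  assumes "0 < s"
  shows "x \<in> cube s k \<longleftrightarrow> cube_index s x = k"
proof -
  have "x \<in> cube s k \<longleftrightarrow> (\<forall>i. of_int (k$i) \<le> x$i / s \<and> x$i / s < of_int (k$i) + 1)"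
    unfolding cube_def using assms by (simp add: field_simps)
  also have "\<dots> \<longleftrightarrow> cube_index s x = k"
    unfolding cube_index_def by (simp add: vec_eq_iff floor_eq_iff eq_commute[of "\<lfloor>_\<rfloor>"])
  finally show ?thesis .
qed

lemma mem_cube_cube_index: "0 < s \<Longrightarrow> x \<in> cube s (cube_index s x)"
  by (simp add: mem_cube_iff_cube_index)

lemma cube_borel: "cube s k \<in> sets (borel :: (real^'n) measure)"
proof -
  have "cube s k = (\<Inter>i. {x::real^'n. s * of_int (k$i) \<le> x$i}) \<inter> (\<Inter>i. {x. x$i < s * (of_int (k$i) + 1)})"
    unfolding cube_def by auto
  also have "\<dots> \<in> sets borel"
    by (intro sets.Int sets.countable_INT' borel_closed borel_open closed_Collect_le
        open_Collect_less continuous_intros) auto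
  finally show ?thesis .
qed

lemma cube_lebesgue [measurable]: "cube s k \<in> sets (lebesgue :: (real^'n) measure)"
  by (rule sets_completionI_sets) (simp add: cube_borel)

lemma emeasure_lebesgue_borel: "S \<in> sets borel \<Longrightarrow> emeasure lebesgue S = emeasure lborel S"
  by (simp add: sets_completionI_sets)

lemma emeasure_cube:
  assumes "0 < s"
  shows "emeasure lebesgue (cube s k :: (real^'n) set) = ennreal (s ^ CARD('n))"
proof -
  define a :: "real^'n" where "a = (\<chi> i. s * of_int (k$i))"
  define b :: "real^'n" where "b = (\<chi> i. s * (of_int (k$i) + 1))"
  have sub: "box a b \<subseteq> cube s k" "cube s k \<subseteq> cbox a b"
    unfolding cube_def a_def b_def by (auto simp: mem_box_cart less_imp_le)
  have "a \<in> cbox a b" using assms by (simp add: mem_box_cart a_def b_def)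
  then have "measure lborel (cbox a b) = s ^ CARD('n)"
    by (subst content_cbox_cart) (auto simp: a_def b_def algebra_simps)
  then have cbox: "emeasure lborel (cbox a b) = ennreal (s ^ CARD('n))"
    using emeasure_lborel_cbox_finite[of a b] by (simp add: emeasure_eq_ennreal_measure less_top)
  moreover have "emeasure lborel (box a b) = emeasure lborel (cbox a b)"
    by (simp only: emeasure_lborel_box_eq emeasure_lborel_cbox_eq)
  ultimately have "emeasure lborel (cube s k) = ennreal (s ^ CARD('n))"
    using emeasure_mono[OF sub(1), of lborel] emeasure_mono[OF sub(2), of lborel]
    by (simp add: cube_borel antisym)
  then show ?thesis by (simp add: cube_borel emeasure_lebesgue_borel)
qed

lemma measurable_cube_index:
  assumes "0 < s"
  shows "cube_index s \<in> (lebesgue :: (real^'n) measure) \<rightarrow>\<^sub>M count_space UNIV"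
proof (subst measurable_count_space_eq2_countable, safe)
  fix k :: "int^'n"
  have "cube_index s -` {k} \<inter> space lebesgue = cube s k"
    using mem_cube_iff_cube_index[OF assms] by auto
  then show "cube_index s -` {k} \<inter> space lebesgue \<in> sets lebesgue" by simp
qed auto

lemma borel_measurable_comp_cube_index:
  "0 < s \<Longrightarrow> (\<lambda>x. F (cube_index s x)) \<in> borel_measurable (lebesgue :: (real^'n) measure)"
  by (rule measurable_compose[OF measurable_cube_index]) simp_all

lemma nn_integral_cube_index:
  fixes F :: "int^'n \<Rightarrow> ennreal"
  assumes "0 < s"
  shows "(\<integral>\<^sup>+x. F (cube_index s x) \<partial>lebesgue) = ennreal (s ^ CARD('n)) * (\<Sum>\<^sub>\<infinity>k\<in>UNIV. F k)"
proof -
  have "F (cube_index s x) = (\<integral>\<^sup>+k. F k * indicator (cube s k) x \<partial>count_space UNIV)" for x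
  proof -
    have "(\<lambda>k. F k * indicator (cube s k) x) = (\<lambda>k. F k * indicator {cube_index s x} k)"
      using mem_cube_iff_cube_index[OF assms] by (auto simp: fun_eq_iff split: split_indicator)
    then show ?thesis by simp
  qed
  then have "(\<integral>\<^sup>+x. F (cube_index s x) \<partial>lebesgue) =
      (\<integral>\<^sup>+k. \<integral>\<^sup>+x. F k * indicator (cube s k) x \<partial>lebesgue \<partial>count_space UNIV)"
    by (simp add: nn_integral_count_space_nn_integral)
  also have "\<dots> = (\<integral>\<^sup>+k. F k * ennreal (s ^ CARD('n)) \<partial>count_space UNIV)"
    by (simp only: nn_integral_cmult_indicator[OF cube_lebesgue] emeasure_cube[OF assms])
  also have "\<dots> = ennreal (s ^ CARD('n)) * (\<Sum>\<^sub>\<infinity>k\<in>UNIV. F k)"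
    by (simp add: nn_integral_multc infsum_eq_nn_integral_count_space mult.commute)
  finally show ?thesis .
qed

definition int_box :: "int \<Rightarrow> int \<Rightarrow> (int^'n) set" where
  "int_box a b = {v. \<forall>i. v$i \<in> {a..b}}"

lemma finite_int_box: "finite (int_box a b)"
proof -
  have "vec_nth ` int_box a b \<subseteq> Pi\<^sub>E UNIV (\<lambda>_. {a..b})"
    unfolding int_box_def by auto
  then have "finite (vec_nth ` int_box a b)" by (rule finite_subset) (auto intro: finite_PiE)
  then show ?thesis by (rule finite_imageD) (simp add: inj_on_def vec_eq_iff)
qed

lemma zero_mem_int_box: "a \<le> 0 \<Longrightarrow> 0 \<le> b \<Longrightarrow> 0 \<in> int_box a b"
  by (simp add: int_box_def)

lemma cube_index_diff_in_int_box:
  fixes x y :: "real^'n"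
  assumes "0 < t" "y \<in> ball x t"
  shows "cube_index t y - cube_index t x \<in> int_box (-1) 1"
  unfolding int_box_def
proof (safe)
  fix i
  have "\<bar>y$i - x$i\<bar> \<le> dist y x" using component_le_norm_cart[of "y - x" i] by (simp add: dist_norm)
  also have "\<dots> < t" using assms(2) by (simp add: dist_commute)
  finally have "\<bar>y$i / t - x$i / t\<bar> < 1" using assms(1) by (simp add: diff_divide_distrib[symmetric])
  moreover have "of_int \<lfloor>y$i / t\<rfloor> \<le> y$i / t" "y$i / t < of_int \<lfloor>y$i / t\<rfloor> + 1"
    "of_int \<lfloor>x$i / t\<rfloor> \<le> x$i / t" "x$i / t < of_int \<lfloor>x$i / t\<rfloor> + 1"
    by linarith+
  ultimately have "\<bar>\<lfloor>y$i / t\<rfloor> - \<lfloor>x$i / t\<rfloor>\<bar> \<le> 1" by linarith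
  then show "(cube_index t y - cube_index t x)$i \<in> {-1..1}" by (simp add: cube_index_def abs_le_iff)
qed

lemma cube_index_subcube_in_int_box:
  fixes y :: "real^'n"
  assumes "0 < t" "0 < m" "y \<in> cube t k"
  shows "cube_index (t / m) y - int m *s k \<in> int_box 0 (int m - 1)"
  unfolding int_box_def
proof (safe)
  fix i
  have k: "of_int (k$i) \<le> y$i / t" "y$i / t < of_int (k$i) + 1"
    using assms(1,3) unfolding cube_def by (auto simp: field_simps)
  have eq: "y$i / (t / m) = real m * (y$i / t)" by simp
  have "real m * of_int (k$i) \<le> y$i / (t / m)"
    unfolding eq by (rule mult_left_mono) (use k in auto)
  moreover have "real m * (y$i / t) < real m * (of_int (k$i) + 1)"
    by (rule mult_strict_left_mono) (use k assms(2) in auto)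
  then have "y$i / (t / m) < real m * of_int (k$i) + real m"
    unfolding eq by (simp add: distrib_left)
  ultimately have "int m * k$i \<le> \<lfloor>y$i / (t / m)\<rfloor>" "\<lfloor>y$i / (t / m)\<rfloor> < int m * k$i + int m"
    by (simp_all add: le_floor_iff floor_less_iff)
  then show "(cube_index (t / m) y - int m *s k)$i \<in> {0..int m - 1}"
    by (simp add: cube_index_def)
qed

lemma ball_lebesgue [measurable]: "ball x r \<in> sets (lebesgue :: 'a::euclidean_space measure)"
  by (rule sets_completionI_sets) simp

lemma emeasure_lebesgue_ball:
  fixes x :: "real^'n"
  assumes "0 < t"
  shows "0 < emeasure lebesgue (ball x t)" "emeasure lebesgue (ball x t) < top"
proof -
  have "emeasure lebesgue (ball x t) = ennreal (measure lborel (ball x t))"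
    using emeasure_lborel_ball_finite[of x t]
    by (simp add: emeasure_lebesgue_borel emeasure_eq_ennreal_measure less_top)
  then show "0 < emeasure lebesgue (ball x t)" "emeasure lebesgue (ball x t) < top"
    using content_ball_pos[OF assms, of x] by simp_all
qed

lemma cube_subset_ball:
  fixes x :: "real^'n"
  assumes "x \<in> cube s k" "real CARD('n) * s \<le> t"
  shows "cube s k \<subseteq> ball x t"
proof
  fix y assume y: "y \<in> cube s k"
  have "\<bar>(x - y)$i\<bar> < s" for i
  proof -
    have "s * of_int (k$i) \<le> x$i" "x$i < s * of_int (k$i) + s"
      "s * of_int (k$i) \<le> y$i" "y$i < s * of_int (k$i) + s"
      using assms(1) y unfolding cube_def by (auto simp: distrib_left)
    then show ?thesis by (simp add: abs_less_iff)
  qed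
  then have "dist x y < (\<Sum>i\<in>(UNIV::'n set). s)"
    unfolding dist_norm by (intro le_less_trans[OF norm_le_l1_cart] sum_strict_mono) auto
  also have "\<dots> \<le> t" using assms(2) by simp
  finally show "y \<in> ball x t" by simp
qed

section \<open>The quasi-triangle inequality under a lower type\<close>

locale orlicz_lower_type =
  fixes \<Phi> :: "real \<Rightarrow> real" and C p :: real
  assumes orlicz: "orlicz_function \<Phi>" and C_pos: "0 < C" and p_pos: "0 < p"
    and lower: "\<And>\<tau> s. 0 \<le> \<tau> \<Longrightarrow> 0 < s \<Longrightarrow> s < 1 \<Longrightarrow> \<Phi> (s * \<tau>) \<le> C * s powr p * \<Phi> \<tau>"

lemma lower_type_imp_orlicz_lower_type:
  assumes "orlicz_function \<Phi>" "lower_type \<Phi> p" "0 < p"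
  obtains C where "orlicz_lower_type \<Phi> C p"
  using assms unfolding lower_type_def orlicz_lower_type_def by blast

context orlicz_lower_type
begin

definition cover_const :: "nat \<Rightarrow> real" where
  "cover_const N = 2 + (C * N) powr (1 / p)"

lemma cover_const_ge_2: "2 \<le> cover_const N"
  by (simp add: cover_const_def)

lemma le_cover_const_powr: "C * N \<le> cover_const N powr p"
proof -
  have "C * N = ((C * N) powr (1 / p)) powr p"
    using C_pos p_pos by (simp add: powr_powr)
  also have "\<dots> \<le> cover_const N powr p"
    unfolding cover_const_def using p_pos by (intro powr_mono2) auto
  finally show ?thesis .
qed

lemma orlicz_modular_dilate:
  assumes "g \<in> borel_measurable lebesgue" "1 < K" "0 < l"
  shows "orlicz_modular \<Phi> g (K * l) \<le> ennreal (C * (1 / K) powr p) * orlicz_modular \<Phi> g l"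
proof -
  have "ennreal (\<Phi> (\<bar>g x\<bar> / (K * l))) \<le> ennreal (C * (1 / K) powr p) * ennreal (\<Phi> (\<bar>g x\<bar> / l))" for x
  proof -
    have "\<Phi> ((1 / K) * (\<bar>g x\<bar> / l)) \<le> C * (1 / K) powr p * \<Phi> (\<bar>g x\<bar> / l)"
      using assms by (intro lower) auto
    then show ?thesis
      using assms C_pos orlicz_function_nonneg[OF orlicz, of "\<bar>g x\<bar> / l"]
      by (simp add: ennreal_mult[symmetric] ennreal_leI)
  qed
  then have "orlicz_modular \<Phi> g (K * l) \<le> (\<integral>\<^sup>+x. ennreal (C * (1 / K) powr p) * ennreal (\<Phi> (\<bar>g x\<bar> / l)) \<partial>lebesgue)"
    by (rule nn_integral_mono)
  also have "\<dots> = ennreal (C * (1 / K) powr p) * orlicz_modular \<Phi> g l"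
    using assms by (intro nn_integral_cmult measurable_orlicz_modular_integrand[OF orlicz])
  finally show ?thesis .
qed

(* The lower type turns the bound card I on the modular at level L into the bound 1 at level
   cover_const (card I) * L. *)
lemma orlicz_norm_cover_le_level:
  assumes "finite I" "g \<in> borel_measurable lebesgue"
    and "\<And>i. i \<in> I \<Longrightarrow> G i \<in> borel_measurable lebesgue"
    and cover: "\<And>y. \<exists>i\<in>I. \<bar>g y\<bar> \<le> \<bar>G i y\<bar>"
    and "0 < L" "\<And>i. i \<in> I \<Longrightarrow> orlicz_norm \<Phi> (G i) < ennreal L"
  shows "orlicz_norm \<Phi> g \<le> ennreal (cover_const (card I) * L)"
proof (rule orlicz_norm_le)
  define K where "K = cover_const (card I)"
  have K: "2 \<le> K" unfolding K_def by (rule cover_const_ge_2)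
  then show "0 < cover_const (card I) * L" using \<open>0 < L\<close> unfolding K_def by simp
  have "orlicz_modular \<Phi> g L \<le> (\<Sum>i\<in>I. orlicz_modular \<Phi> (G i) L)"
    by (rule orlicz_modular_cover_le[OF orlicz assms(1) \<open>0 < L\<close> assms(3) cover])
  also have "\<dots> \<le> (\<Sum>i\<in>I. 1)"
    using assms(6) by (intro sum_mono orlicz_modular_le_one[OF orlicz])
  finally have modular_L: "orlicz_modular \<Phi> g L \<le> of_nat (card I)" by simp
  have "orlicz_modular \<Phi> g (K * L) \<le> ennreal (C * (1 / K) powr p) * orlicz_modular \<Phi> g L"
    using K \<open>0 < L\<close> by (intro orlicz_modular_dilate assms(2)) auto
  also have "\<dots> \<le> ennreal (C * (1 / K) powr p) * of_nat (card I)"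
    using modular_L by (rule mult_left_mono) simp
  also have "\<dots> = ennreal (C * card I / K powr p)"
    using C_pos K by (simp add: ennreal_mult[symmetric] ennreal_of_nat_eq_real_of_nat powr_divide)
  also have "\<dots> \<le> 1"
    using le_cover_const_powr[of "card I"] K unfolding K_def by (simp add: divide_le_eq_1)
  finally show "orlicz_modular \<Phi> g (cover_const (card I) * L) \<le> 1" unfolding K_def .
qed

lemma orlicz_norm_cover_le:
  assumes "finite I" "g \<in> borel_measurable lebesgue"
    and "\<And>i. i \<in> I \<Longrightarrow> G i \<in> borel_measurable lebesgue"
    and cover: "\<And>y. \<exists>i\<in>I. \<bar>g y\<bar> \<le> \<bar>G i y\<bar>"
  shows "orlicz_norm \<Phi> g \<le> ennreal (cover_const (card I)) * Max ((\<lambda>i. orlicz_norm \<Phi> (G i)) ` I)"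
proof -
  let ?K = "cover_const (card I)"
  define M where "M = Max ((\<lambda>i. orlicz_norm \<Phi> (G i)) ` I)"
  have K: "2 \<le> ?K" by (rule cover_const_ge_2)
  show ?thesis unfolding M_def[symmetric]
  proof (cases M rule: ennreal_cases)
    case (real m)
    show "orlicz_norm \<Phi> g \<le> ennreal ?K * M"
    proof (rule ennreal_le_epsilon)
      fix e :: real assume "0 < e"
      have "orlicz_norm \<Phi> g \<le> ennreal (?K * (m + e / ?K))"
      proof (rule orlicz_norm_cover_le_level[OF assms])
        show "0 < m + e / ?K" using \<open>0 < e\<close> K real by (auto intro!: add_nonneg_pos)
        fix i assume "i \<in> I"
        then have "orlicz_norm \<Phi> (G i) \<le> M" unfolding M_def using assms(1) by simp
        also have "M < ennreal (m + e / ?K)" unfolding real using \<open>0 < e\<close> K real by simp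
        finally show "orlicz_norm \<Phi> (G i) < ennreal (m + e / ?K)" .
      qed
      also have "\<dots> = ennreal ?K * M + ennreal e"
        unfolding real using K real \<open>0 < e\<close> by (simp add: distrib_left ennreal_plus ennreal_mult[symmetric])
      finally show "orlicz_norm \<Phi> g \<le> ennreal ?K * M + ennreal e" .
    qed
  qed (use K in \<open>simp add: ennreal_mult_top\<close>)
qed

lemma orlicz_norm_pow_cover_le:
  assumes "finite I" "I \<noteq> {}" "0 < q" "f \<in> borel_measurable lebesgue"
    and "A \<in> sets lebesgue" "\<And>i. i \<in> I \<Longrightarrow> B i \<in> sets lebesgue" "A \<subseteq> (\<Union>i\<in>I. B i)"
  shows "orlicz_norm_pow \<Phi> q f A \<le>
    ennreal (cover_const (card I) powr q) * (\<Sum>i\<in>I. orlicz_norm_pow \<Phi> q f (B i))"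
proof -
  let ?N = "\<lambda>i. orlicz_norm \<Phi> (\<lambda>y. f y * indicator (B i) y)"
  have "Max (?N ` I) \<in> ?N ` I" using assms(1,2) by (intro Max_in) auto
  then obtain i0 where i0: "i0 \<in> I" "?N i0 = Max (?N ` I)" by force
  have "\<exists>i\<in>I. \<bar>f y * indicator A y\<bar> \<le> \<bar>f y * indicator (B i) y\<bar>" for y
    using assms(2,7) by (cases "y \<in> A") (auto split: split_indicator)
  then have "orlicz_norm \<Phi> (\<lambda>y. f y * indicator A y) \<le>
      ennreal (cover_const (card I)) * orlicz_norm \<Phi> (\<lambda>y. f y * indicator (B i0) y)"
    unfolding i0(2) using assms by (intro orlicz_norm_cover_le) auto
  then have "orlicz_norm_pow \<Phi> q f A \<le> ennreal (cover_const (card I) powr q) * orlicz_norm_pow \<Phi> q f (B i0)"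
    using cover_const_ge_2[of "card I"] assms(3) by (intro ennpow_le_cmult) auto
  also have "\<dots> \<le> ennreal (cover_const (card I) powr q) * (\<Sum>i\<in>I. orlicz_norm_pow \<Phi> q f (B i))"
    using assms(1) i0(1) by (intro mult_left_mono member_le_sum) auto
  finally show ?thesis .
qed

end

section \<open>Comparison of the two norms\<close>

abbreviation ball_integral :: "(real \<Rightarrow> real) \<Rightarrow> real \<Rightarrow> real \<Rightarrow> (real^'n \<Rightarrow> real) \<Rightarrow> ennreal" where
  "ball_integral \<Phi> q t f \<equiv> \<integral>\<^sup>+ x. orlicz_norm_pow \<Phi> q f (ball x t) \<partial>lebesgue"

abbreviation cube_sum :: "(real \<Rightarrow> real) \<Rightarrow> real \<Rightarrow> real \<Rightarrow> (real^'n \<Rightarrow> real) \<Rightarrow> ennreal" where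
  "cube_sum \<Phi> q t f \<equiv> \<Sum>\<^sub>\<infinity>k\<in>UNIV. orlicz_norm_pow \<Phi> q f (cube t k)"

lemma small_cube_sum_le_ball_integral:
  fixes f :: "real^'n \<Rightarrow> real"
  assumes "orlicz_function \<Phi>" "0 < q" "0 < s" "real CARD('n) * s \<le> t"
  shows "ennreal (s ^ CARD('n)) * cube_sum \<Phi> q s f \<le> ball_integral \<Phi> q t f"
proof -
  have "orlicz_norm_pow \<Phi> q f (cube s (cube_index s x)) \<le> orlicz_norm_pow \<Phi> q f (ball x t)" for x
  proof -
    have "cube s (cube_index s x) \<subseteq> ball x t"
      using assms(3,4) by (intro cube_subset_ball mem_cube_cube_index)
    then show ?thesis
      using assms(2) by (intro ennpow_mono orlicz_norm_mono[OF assms(1)]) (auto split: split_indicator)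
  qed
  then show ?thesis
    unfolding nn_integral_cube_index[OF assms(3), symmetric] by (rule nn_integral_mono)
qed

context orlicz_lower_type
begin

lemma ball_norm_pow_le_neighbour_cubes:
  fixes f :: "real^'n \<Rightarrow> real"
  defines "J \<equiv> int_box (-1) 1 :: (int^'n) set"
  assumes "0 < q" "0 < t" "f \<in> borel_measurable lebesgue"
  shows "orlicz_norm_pow \<Phi> q f (ball x t) \<le>
    ennreal (cover_const (card J) powr q) * (\<Sum>j\<in>J. orlicz_norm_pow \<Phi> q f (cube t (cube_index t x + j)))"
proof (rule orlicz_norm_pow_cover_le)
  show "ball x t \<subseteq> (\<Union>j\<in>J. cube t (cube_index t x + j))"
  proof
    fix y assume "y \<in> ball x t"
    then have "cube_index t y - cube_index t x \<in> J"
      unfolding J_def using assms(3) by (rule cube_index_diff_in_int_box[rotated])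
    then show "y \<in> (\<Union>j\<in>J. cube t (cube_index t x + j))"
      using mem_cube_cube_index[OF assms(3), of y] by force
  qed
qed (use assms zero_mem_int_box[of "-1" 1] in \<open>auto simp: finite_int_box\<close>)

lemma ball_integral_le_cube_sum:
  fixes f :: "real^'n \<Rightarrow> real"
  defines "J \<equiv> int_box (-1) 1 :: (int^'n) set"
  assumes "0 < q" "0 < t" "f \<in> borel_measurable lebesgue"
  shows "ball_integral \<Phi> q t f \<le>
    ennreal (cover_const (card J) powr q * card J) * (ennreal (t ^ CARD('n)) * cube_sum \<Phi> q t f)"
proof -
  define K where "K = cover_const (card J) powr q"
  define a where "a k = orlicz_norm_pow \<Phi> q f (cube t k)" for k
  have "ball_integral \<Phi> q t f \<le> (\<integral>\<^sup>+x. ennreal K * (\<Sum>j\<in>J. a (cube_index t x + j)) \<partial>lebesgue)"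
    unfolding K_def a_def J_def using assms(2-4) by (intro nn_integral_mono ball_norm_pow_le_neighbour_cubes)
  also have "\<dots> = ennreal K * (\<integral>\<^sup>+x. (\<Sum>j\<in>J. a (cube_index t x + j)) \<partial>lebesgue)"
    by (rule nn_integral_cmult[OF borel_measurable_comp_cube_index[OF assms(3)]])
  also have "\<dots> = ennreal K * (ennreal (t ^ CARD('n)) * (\<Sum>\<^sub>\<infinity>k\<in>UNIV. \<Sum>j\<in>J. a (k + j)))"
    by (simp only: nn_integral_cube_index[OF assms(3), of "\<lambda>k. \<Sum>j\<in>J. a (k + j)"])
  also have "\<dots> \<le> ennreal K * (ennreal (t ^ CARD('n)) * (of_nat (card J) * cube_sum \<Phi> q t f))"
    unfolding a_def J_def by (intro mult_left_mono infsum_sum_inj_le finite_int_box) simp_all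
  also have "\<dots> = ennreal (K * card J) * (ennreal (t ^ CARD('n)) * cube_sum \<Phi> q t f)"
    by (simp add: K_def ennreal_mult ennreal_of_nat_eq_real_of_nat mult_ac)
  finally show ?thesis unfolding K_def .
qed

lemma cube_norm_pow_le_subcubes:
  fixes f :: "real^'n \<Rightarrow> real"
  defines "m \<equiv> CARD('n)"
  defines "R \<equiv> int_box 0 (int m - 1) :: (int^'n) set"
  assumes "0 < q" "0 < t" "f \<in> borel_measurable lebesgue"
  shows "orlicz_norm_pow \<Phi> q f (cube t k) \<le>
    ennreal (cover_const (card R) powr q) * (\<Sum>r\<in>R. orlicz_norm_pow \<Phi> q f (cube (t / m) (int m *s k + r)))"
proof (rule orlicz_norm_pow_cover_le)
  have "0 < m" unfolding m_def by simp
  show "cube t k \<subseteq> (\<Union>r\<in>R. cube (t / m) (int m *s k + r))"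
  proof
    fix y assume "y \<in> cube t k"
    then have "cube_index (t / m) y - int m *s k \<in> R"
      unfolding R_def using assms(4) \<open>0 < m\<close> by (rule cube_index_subcube_in_int_box[rotated 2])
    then show "y \<in> (\<Union>r\<in>R. cube (t / m) (int m *s k + r))"
      using mem_cube_cube_index[of "t / m" y] assms(4) \<open>0 < m\<close> by force
  qed
  show "R \<noteq> {}" unfolding R_def using zero_mem_int_box[of 0 "int m - 1"] \<open>0 < m\<close> by auto
qed (use assms in \<open>auto simp: R_def finite_int_box\<close>)

lemma cube_sum_le_subcube_sum:
  fixes f :: "real^'n \<Rightarrow> real"
  defines "m \<equiv> CARD('n)"
  defines "R \<equiv> int_box 0 (int m - 1) :: (int^'n) set"
  assumes "0 < q" "0 < t" "f \<in> borel_measurable lebesgue"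
  shows "cube_sum \<Phi> q t f \<le> ennreal (cover_const (card R) powr q * card R) * cube_sum \<Phi> q (t / m) f"
proof -
  define K where "K = cover_const (card R) powr q"
  have "cube_sum \<Phi> q t f \<le>
      (\<Sum>\<^sub>\<infinity>k\<in>UNIV. ennreal K * (\<Sum>r\<in>R. orlicz_norm_pow \<Phi> q f (cube (t / m) (int m *s k + r))))"
    unfolding K_def R_def m_def using assms(3-5)
    by (intro infsum_mono nonneg_summable_on_complete cube_norm_pow_le_subcubes) auto
  also have "\<dots> \<le> ennreal K * (of_nat (card R) * cube_sum \<Phi> q (t / m) f)"
    unfolding infsum_ennreal_cmult R_def m_def
    by (intro mult_left_mono infsum_sum_inj_le finite_int_box) (auto simp: inj_def vec_eq_iff)
  finally show ?thesis
    by (simp add: K_def ennreal_mult ennreal_of_nat_eq_real_of_nat mult_ac)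
qed

lemma cube_sum_le_ball_integral:
  fixes f :: "real^'n \<Rightarrow> real"
  defines "m \<equiv> CARD('n)"
  defines "R \<equiv> int_box 0 (int m - 1) :: (int^'n) set"
  assumes "0 < q" "0 < t" "f \<in> borel_measurable lebesgue"
  shows "ennreal (t ^ CARD('n)) * cube_sum \<Phi> q t f \<le>
    ennreal (cover_const (card R) powr q * card R * real m ^ CARD('n)) * ball_integral \<Phi> q t f"
proof -
  define A where "A = cover_const (card R) powr q * card R"
  define s where "s = t / m"
  have A: "0 \<le> A" and s: "0 < s" using assms(4) by (simp_all add: A_def s_def m_def)
  have "ennreal (t ^ CARD('n)) * cube_sum \<Phi> q t f \<le> ennreal (t ^ CARD('n)) * (ennreal A * cube_sum \<Phi> q s f)"
    unfolding A_def s_def R_def m_def using assms(3-5) by (intro mult_left_mono cube_sum_le_subcube_sum) auto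
  also have "\<dots> = ennreal (t ^ CARD('n) * A) * cube_sum \<Phi> q s f"
    using A assms(4) by (simp add: ennreal_mult mult.assoc)
  also have "t ^ CARD('n) * A = A * real m ^ CARD('n) * s ^ CARD('n)"
    unfolding s_def m_def by (simp add: power_divide)
  also have "ennreal \<dots> * cube_sum \<Phi> q s f = ennreal (A * real m ^ CARD('n)) * (ennreal (s ^ CARD('n)) * cube_sum \<Phi> q s f)"
    using A s by (simp add: ennreal_mult mult.assoc)
  also have "\<dots> \<le> ennreal (A * real m ^ CARD('n)) * ball_integral \<Phi> q t f"
    using s assms(3) unfolding s_def m_def
    by (intro mult_left_mono small_cube_sum_le_ball_integral[OF orlicz]) auto
  finally show ?thesis unfolding A_def .
qed

lemma orlicz_norm_indicator_finite:
  assumes "A \<in> sets lebesgue" "emeasure lebesgue A < top"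
  shows "orlicz_norm \<Phi> (indicator A :: real^'n \<Rightarrow> real) < top"
proof -
  obtain v where v: "0 \<le> v" "emeasure lebesgue A = ennreal v"
    using assms(2) by (cases "emeasure lebesgue A" rule: ennreal_cases) auto
  define a where "a = C * \<Phi> 1 * v"
  have a: "0 \<le> a" unfolding a_def using C_pos v orlicz_function_nonneg[OF orlicz, of 1] by simp
  define s where "s = min (1 / 2) ((1 / (a + 1)) powr (1 / p))"
  have s: "0 < s" "s < 1" unfolding s_def using a by auto
  have "s powr p \<le> ((1 / (a + 1)) powr (1 / p)) powr p"
    unfolding s_def using s p_pos by (intro powr_mono2) auto
  also have "\<dots> = 1 / (a + 1)" using a p_pos by (simp add: powr_powr)
  finally have "a * s powr p \<le> a * (1 / (a + 1))" using a by (rule mult_left_mono)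
  also have "\<dots> \<le> 1" using a by (simp add: field_simps)
  finally have "a * s powr p \<le> 1" .
  moreover have "\<Phi> s * v \<le> a * s powr p"
    using mult_right_mono[OF lower[of 1 s] v(1)] s unfolding a_def by (simp add: mult_ac)
  ultimately have "ennreal (\<Phi> (1 / (1 / s))) * emeasure lebesgue A \<le> 1"
    using v s orlicz_function_nonneg[OF orlicz, of s] by (simp add: ennreal_mult[symmetric])
  then have "orlicz_modular \<Phi> (indicator A :: real^'n \<Rightarrow> real) (1 / s) \<le> 1"
    by (simp only: orlicz_modular_indicator[OF orlicz assms(1)])
  then have "orlicz_norm \<Phi> (indicator A :: real^'n \<Rightarrow> real) \<le> ennreal (1 / s)"
    using s by (intro orlicz_norm_le) auto
  then show ?thesis using le_less_trans by fastforce
qed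

lemma orlicz_norm_indicator_ball:
  fixes x :: "real^'n"
  assumes "0 < t"
  obtains c where "0 < c" "orlicz_norm \<Phi> (indicator (ball x t)) = ennreal c"
proof -
  let ?c = "orlicz_norm \<Phi> (indicator (ball x t))"
  have "0 < ?c"
    by (rule orlicz_norm_indicator_pos[OF orlicz ball_lebesgue emeasure_lebesgue_ball(1)[OF assms]])
  moreover have "?c < top"
    by (rule orlicz_norm_indicator_finite[OF ball_lebesgue emeasure_lebesgue_ball(2)[OF assms]])
  ultimately show thesis by (cases ?c rule: ennreal_cases) (auto intro: that)
qed

lemma E_norm_eq_ball_integral:
  fixes f :: "real^'n \<Rightarrow> real"
  assumes "0 < q" "0 < t"
  shows "E_norm \<Phi> q t f =
    ennpow (ball_integral \<Phi> q t f) (1 / q) / orlicz_norm \<Phi> (indicator (ball (0::real^'n) t))"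
proof -
  obtain c where c: "orlicz_norm \<Phi> (indicator (ball (0::real^'n) t)) = ennreal c" "0 < c"
    using orlicz_norm_indicator_ball[OF assms(2)] by blast
  have "orlicz_norm \<Phi> (indicator (ball x t) :: real^'n \<Rightarrow> real) = ennreal c" for x
    unfolding c(1)[symmetric]
    by (rule orlicz_norm_indicator_cong[OF orlicz ball_lebesgue ball_lebesgue])
      (simp only: emeasure_lebesgue_ball_conv_unit_ball[OF less_imp_le[OF assms(2)]])
  then have "E_norm \<Phi> q t f =
      ennpow (\<integral>\<^sup>+x. orlicz_norm_pow \<Phi> q f (ball x t) / ennreal (c powr q) \<partial>lebesgue) (1 / q)"
    unfolding E_norm_def using c(2) assms(1) by (simp add: ennpow_divide)
  also have "\<dots> = ennpow (ball_integral \<Phi> q t f) (1 / q) / ennreal c"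
    using c(2) assms(1) by (simp add: nn_integral_divide_nonmeasurable ennpow_divide powr_powr)
  finally show ?thesis unfolding c(1) .
qed

lemma ball_integral_equiv_cube_sum:
  assumes "0 < q"
  obtains A where "0 < A"
    "\<And>t f. 0 < t \<Longrightarrow> f \<in> borel_measurable lebesgue \<Longrightarrow>
      ball_integral \<Phi> q t f \<le> ennreal A * (ennreal (t ^ CARD('n)) * cube_sum \<Phi> q t (f :: real^'n \<Rightarrow> real))"
    "\<And>t f. 0 < t \<Longrightarrow> f \<in> borel_measurable lebesgue \<Longrightarrow>
      ennreal (t ^ CARD('n)) * cube_sum \<Phi> q t f \<le> ennreal A * ball_integral \<Phi> q t (f :: real^'n \<Rightarrow> real)"
proof -
  define J :: "(int^'n) set" where "J = int_box (-1) 1"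
  define R :: "(int^'n) set" where "R = int_box 0 (int CARD('n) - 1)"
  define A1 where "A1 = cover_const (card J) powr q * card J"
  define A2 where "A2 = cover_const (card R) powr q * card R * real CARD('n) ^ CARD('n)"
  have A: "ennreal A1 \<le> ennreal (A1 + A2 + 1)" "ennreal A2 \<le> ennreal (A1 + A2 + 1)"
    by (simp_all add: A1_def A2_def ennreal_leI)
  show thesis
  proof (rule that[of "A1 + A2 + 1"])
    show "0 < A1 + A2 + 1" by (simp add: A1_def A2_def add_nonneg_pos)
  next
    fix t :: real and f :: "real^'n \<Rightarrow> real"
    assume "0 < t" "f \<in> borel_measurable lebesgue"
    then have "ball_integral \<Phi> q t f \<le> ennreal A1 * (ennreal (t ^ CARD('n)) * cube_sum \<Phi> q t f)"
      unfolding A1_def J_def by (rule ball_integral_le_cube_sum[OF assms])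
    also have "\<dots> \<le> ennreal (A1 + A2 + 1) * (ennreal (t ^ CARD('n)) * cube_sum \<Phi> q t f)"
      by (rule mult_right_mono[OF A(1)]) simp
    finally show "ball_integral \<Phi> q t f \<le> ennreal (A1 + A2 + 1) * (ennreal (t ^ CARD('n)) * cube_sum \<Phi> q t f)" .
  next
    fix t :: real and f :: "real^'n \<Rightarrow> real"
    assume "0 < t" "f \<in> borel_measurable lebesgue"
    then have "ennreal (t ^ CARD('n)) * cube_sum \<Phi> q t f \<le> ennreal A2 * ball_integral \<Phi> q t f"
      unfolding A2_def R_def by (rule cube_sum_le_ball_integral[OF assms])
    also have "\<dots> \<le> ennreal (A1 + A2 + 1) * ball_integral \<Phi> q t f"
      by (rule mult_right_mono[OF A(2)]) simp
    finally show "ennreal (t ^ CARD('n)) * cube_sum \<Phi> q t f \<le> ennreal (A1 + A2 + 1) * ball_integral \<Phi> q t f" .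
  qed
qed

lemma E_space_eq_amalgam_space:
  assumes "0 < q" "0 < t"
  shows "E_space \<Phi> q t = (amalgam_space \<Phi> q t :: (real^'n \<Rightarrow> real) set)"
proof (intro set_eqI)
  fix f :: "real^'n \<Rightarrow> real"
  obtain A where A: "0 < A"
    "\<And>t f. 0 < t \<Longrightarrow> f \<in> borel_measurable lebesgue \<Longrightarrow>
      ball_integral \<Phi> q t f \<le> ennreal A * (ennreal (t ^ CARD('n)) * cube_sum \<Phi> q t (f :: real^'n \<Rightarrow> real))"
    "\<And>t f. 0 < t \<Longrightarrow> f \<in> borel_measurable lebesgue \<Longrightarrow>
      ennreal (t ^ CARD('n)) * cube_sum \<Phi> q t f \<le> ennreal A * ball_integral \<Phi> q t (f :: real^'n \<Rightarrow> real)"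
    using ball_integral_equiv_cube_sum[OF assms(1)] by blast
  have "ball_integral \<Phi> q t f < top \<longleftrightarrow> cube_sum \<Phi> q t f < top"
    if "f \<in> borel_measurable lebesgue"
  proof
    assume "ball_integral \<Phi> q t f < top"
    then have "ennreal (t ^ CARD('n)) * cube_sum \<Phi> q t f < top"
      by (intro le_less_trans[OF A(3)[OF assms(2) that]]) (simp add: ennreal_mult_less_top)
    then show "cube_sum \<Phi> q t f < top"
      using assms(2) by (auto simp: ennreal_mult_less_top)
  next
    assume "cube_sum \<Phi> q t f < top"
    then show "ball_integral \<Phi> q t f < top"
      by (intro le_less_trans[OF A(2)[OF assms(2) that]]) (simp add: ennreal_mult_less_top)
  qed
  moreover have "E_norm \<Phi> q t f < top \<longleftrightarrow> ball_integral \<Phi> q t f < top"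
  proof -
    obtain c where "orlicz_norm \<Phi> (indicator (ball (0::real^'n) t)) = ennreal c" "0 < c"
      using orlicz_norm_indicator_ball[OF assms(2)] by blast
    then show ?thesis
      using ennpow_less_top_iff[of "ball_integral \<Phi> q t f" "1 / q"]
      by (auto simp add: E_norm_eq_ball_integral[OF assms] divide_ennreal_def inverse_ennreal
          ennreal_mult_less_top)
  qed
  ultimately show "f \<in> E_space \<Phi> q t \<longleftrightarrow> f \<in> amalgam_space \<Phi> q t"
    unfolding E_space_def amalgam_space_def amalgam_norm_def by (auto simp: ennpow_less_top_iff)
qed

end

theorem proposition2p12:
  fixes \<Phi> :: "real \<Rightarrow> real" and q :: real
  assumes "orlicz_function \<Phi>"
    and "\<exists>p>0. lower_type \<Phi> p"
    and "\<exists>p>0. upper_type \<Phi> p"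
    and "q > 0"
  shows "(\<forall>t>0. (E_space \<Phi> q t :: (real^'n \<Rightarrow> real) set) = amalgam_space \<Phi> q t) \<and>
    (\<exists>C>0. \<forall>t>0. \<forall>f \<in> (E_space \<Phi> q t :: (real^'n \<Rightarrow> real) set).
       ennpow (ennreal (t ^ CARD('n)) *
           (\<Sum>\<^sub>\<infinity>k\<in>UNIV. ennpow (orlicz_norm \<Phi> (\<lambda>y. f y * indicator (cube t k) y)) q)) (1 / q)
         \<le> ennreal C * ennpow (\<integral>\<^sup>+ x. ennpow (orlicz_norm \<Phi> (\<lambda>y. f y * indicator (ball x t) y)) q \<partial>lebesgue) (1 / q)
     \<and> ennpow (\<integral>\<^sup>+ x. ennpow (orlicz_norm \<Phi> (\<lambda>y. f y * indicator (ball x t) y)) q \<partial>lebesgue) (1 / q)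
         \<le> ennreal C * ennpow (ennreal (t ^ CARD('n)) *
           (\<Sum>\<^sub>\<infinity>k\<in>UNIV. ennpow (orlicz_norm \<Phi> (\<lambda>y. f y * indicator (cube t k) y)) q)) (1 / q))"
proof -
  obtain p where "0 < p" "lower_type \<Phi> p" using assms(2) by blast
  then obtain C where "orlicz_lower_type \<Phi> C p"
    using lower_type_imp_orlicz_lower_type[OF assms(1)] by blast
  then interpret orlicz_lower_type \<Phi> C p .
  obtain A where A: "0 < A"
    "\<And>t f. 0 < t \<Longrightarrow> f \<in> borel_measurable lebesgue \<Longrightarrow>
      ball_integral \<Phi> q t f \<le> ennreal A * (ennreal (t ^ CARD('n)) * cube_sum \<Phi> q t (f :: real^'n \<Rightarrow> real))"
    "\<And>t f. 0 < t \<Longrightarrow> f \<in> borel_measurable lebesgue \<Longrightarrow>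
      ennreal (t ^ CARD('n)) * cube_sum \<Phi> q t f \<le> ennreal A * ball_integral \<Phi> q t (f :: real^'n \<Rightarrow> real)"
    using ball_integral_equiv_cube_sum[OF assms(4)] by blast
  have "0 < A powr (1 / q) \<and> (\<forall>t>0. \<forall>f \<in> (E_space \<Phi> q t :: (real^'n \<Rightarrow> real) set).
      ennpow (ennreal (t ^ CARD('n)) * cube_sum \<Phi> q t f) (1 / q)
        \<le> ennreal (A powr (1 / q)) * ennpow (ball_integral \<Phi> q t f) (1 / q) \<and>
      ennpow (ball_integral \<Phi> q t f) (1 / q)
        \<le> ennreal (A powr (1 / q)) * ennpow (ennreal (t ^ CARD('n)) * cube_sum \<Phi> q t f) (1 / q))"
    using A assms(4) by (auto simp: E_space_def intro!: ennpow_le_cmult)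
  then show ?thesis
    using E_space_eq_amalgam_space[OF assms(4)] by blast
qed

end
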